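(* Fix integers $h\ge0$ and $k\ge1$. For a function $\pi:[h]\to[k]$ and $i\in[k]$ let $h_i(\pi)=|\{q\in[h]:\pi(q)=i\}|$. Then for any $C\ge3$, $$\sum_{\pi:[h]\to[k]}\frac{\prod_{i=1}^kh_i(\pi)^{Ch_i(\pi)}}{h^{Ch}}\le\max\Big\{k^7,\ (hk+1)\exp\!\Big(\frac{2k}{h^{C-1}}\Big)\Big\},$$ with the convention $0^0=1$. *)

theory Defs
  imports Complex_Main "HOL-Library.FuncSet"
begin

definition zpow :: "real \<Rightarrow> real \<Rightarrow> real" where
  "zpow x y = (if x = 0 \<and> y = 0 then 1 else x powr y)"

definition fib :: "nat \<Rightarrow> (nat \<Rightarrow> nat) \<Rightarrow> nat \<Rightarrow> nat" where
  "fib h p i = card {q \<in> {1..h}. p q = i}"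

end

theory Submission
  imports Defs
begin

text \<open>
  Each summand factors as \<open>\<Prod>_i (h_i/h)^h_i\<close> times \<open>\<Prod>_i (h_i/h)^((C-1)h_i)\<close>. For a fixed
  fibre vector \<open>c\<close> the first factor is \<open>\<Prod>_q c_\<pi>(q)/h\<close>, and these products add up to
  \<open>(\<Sum>_i c_i/h)^h = 1\<close> over all \<open>\<pi>\<close>. So the sum is at most the sum of \<open>\<Prod>_i (c_i/h)^((C-1)c_i)\<close>
  over all weak compositions \<open>c\<close> of \<open>h\<close> into \<open>k\<close> parts. All parts but a largest one are at
  most \<open>h/2\<close>, which bounds this by \<open>k S^(k-1)\<close> with \<open>S = \<Sum>_(n \<le> h/2) (n/h)^((C-1)n)\<close>. For
  \<open>h \<ge> 8\<close> the terms of \<open>S\<close> with \<open>n \<ge> 2\<close> add up to at most \<open>h^(1-C)\<close>, so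
  \<open>S \<le> 1 + 2h^(1-C) \<le> exp (2h^(1-C))\<close>. For \<open>h \<le> 7\<close> each of the \<open>k^h\<close> summands is at most 1.
\<close>

definition fibre_weight :: "nat \<Rightarrow> real \<Rightarrow> nat \<Rightarrow> real" where
  "fibre_weight h e n = (if n = 0 then 1 else (real n / real h) powr (e * real n))"

lemma fibre_weight_nonneg: "0 \<le> fibre_weight h e n"
  by (simp add: fibre_weight_def)

lemma fibre_weight_le_1: "n \<le> h \<Longrightarrow> 0 \<le> e \<Longrightarrow> fibre_weight h e n \<le> 1"
  unfolding fibre_weight_def by (auto intro!: powr_le1 simp: divide_le_eq_1)

lemma fibre_weight_split:
  "fibre_weight h e n = (real n / real h) ^ n * fibre_weight h (e - 1) n"
proof (cases "n = 0 \<or> h = 0")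
  case True
  then show ?thesis by (auto simp: fibre_weight_def)
next
  case False
  then have pos: "real n / real h > 0" by simp
  have "(real n / real h) powr (e * real n) = (real n / real h) powr (real n + (e - 1) * real n)"
    by (simp add: algebra_simps)
  also have "\<dots> = (real n / real h) ^ n * (real n / real h) powr ((e - 1) * real n)"
    using pos by (simp add: powr_add powr_realpow)
  finally show ?thesis using False by (simp add: fibre_weight_def)
qed

lemma fib_le: "fib h p i \<le> h"
proof -
  have "fib h p i \<le> card {1..h}" unfolding fib_def by (rule card_mono) auto
  then show ?thesis by simp
qed

lemma sum_fib:
  assumes "p \<in> {1..h} \<rightarrow>\<^sub>E {1..k}"
  shows "(\<Sum>i\<in>{1..k}. fib h p i) = h"
proof -
  have "(\<Sum>i\<in>{1..k}. \<Sum>q\<in>{q \<in> {1..h}. p q = i}. (1::nat)) = (\<Sum>q\<in>{1..h}. 1)"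
    by (rule sum.group) (use assms in auto)
  then show ?thesis unfolding fib_def by simp
qed

lemma prod_fibres:
  fixes F :: "nat \<Rightarrow> 'a::comm_monoid_mult"
  assumes "p \<in> {1..h} \<rightarrow>\<^sub>E {1..k}"
  shows "(\<Prod>q\<in>{1..h}. F (p q)) = (\<Prod>i\<in>{1..k}. F i ^ fib h p i)"
proof -
  have "(\<Prod>q\<in>{1..h}. F (p q)) = (\<Prod>i\<in>{1..k}. \<Prod>q\<in>{q \<in> {1..h}. p q = i}. F (p q))"
    by (rule prod.group[symmetric]) (use assms in auto)
  also have "\<dots> = (\<Prod>i\<in>{1..k}. \<Prod>q\<in>{q \<in> {1..h}. p q = i}. F i)"
    by (intro prod.cong) auto
  finally show ?thesis unfolding fib_def by simp
qed

lemma zpow_fibres_quotient: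
  assumes "p \<in> {1..h} \<rightarrow>\<^sub>E {1..k}"
  shows "(\<Prod>i=1..k. zpow (real (fib h p i)) (C * real (fib h p i))) / zpow (real h) (C * real h)
       = (\<Prod>i=1..k. fibre_weight h C (fib h p i))"
proof (cases "h = 0")
  case True
  then show ?thesis by (simp add: fib_def zpow_def fibre_weight_def)
next
  case False
  then have hpos: "real h > 0" by simp
  have "zpow (real h) (C * real h) = real h powr (\<Sum>i=1..k. C * real (fib h p i))"
    using hpos sum_fib[OF assms]
    by (simp add: zpow_def sum_distrib_left[symmetric] flip: of_nat_sum)
  also have "\<dots> = (\<Prod>i=1..k. real h powr (C * real (fib h p i)))"
    using hpos by (simp add: powr_sum)
  finally have denom: "zpow (real h) (C * real h) = (\<Prod>i=1..k. real h powr (C * real (fib h p i)))" .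
  show ?thesis
    unfolding denom prod_dividef[symmetric]
    using hpos by (intro prod.cong) (auto simp: zpow_def fibre_weight_def powr_divide)
qed

lemma sum_fibre_weight_le_power:
  assumes "0 \<le> e"
  shows "(\<Sum>p\<in>{1..h} \<rightarrow>\<^sub>E {1..k}. \<Prod>i=1..k. fibre_weight h e (fib h p i)) \<le> real k ^ h"
proof -
  have "(\<Sum>p\<in>{1..h} \<rightarrow>\<^sub>E {1..k}. \<Prod>i=1..k. fibre_weight h e (fib h p i))
      \<le> (\<Sum>p\<in>{1..h} \<rightarrow>\<^sub>E {1..k}. 1)"
    using assms
    by (intro sum_mono prod_le_1) (auto simp: fibre_weight_nonneg intro!: fibre_weight_le_1 fib_le)
  also have "\<dots> = real k ^ h" by (simp add: card_PiE)
  finally show ?thesis .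
qed

definition compositions :: "nat \<Rightarrow> 'a set \<Rightarrow> ('a \<Rightarrow> nat) set" where
  "compositions h K = {c \<in> K \<rightarrow>\<^sub>E UNIV. sum c K = h}"

lemma composition_part_le:
  assumes "c \<in> compositions h K" "finite K" "i \<in> K"
  shows "c i \<le> h"
  using assms member_le_sum[of i K c] by (auto simp: compositions_def)

lemma composition_two_parts_le:
  assumes "c \<in> compositions h K" "finite K" "i \<in> K" "j \<in> K" "i \<noteq> j"
  shows "c i + c j \<le> h"
proof -
  have "(\<Sum>l\<in>{i, j}. c l) \<le> (\<Sum>l\<in>K. c l)"
    using assms by (intro sum_mono2) auto
  then show ?thesis using assms by (simp add: compositions_def)
qed

lemma finite_compositions:
  assumes "finite K"
  shows "finite (compositions h K)"
proof (rule finite_subset)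
  show "compositions h K \<subseteq> K \<rightarrow>\<^sub>E {0..h}"
    using composition_part_le[OF _ assms] by (auto simp: compositions_def)
  show "finite (K \<rightarrow>\<^sub>E {0..h})"
    using assms by (simp add: finite_PiE)
qed

lemma restrict_fib_in_compositions:
  assumes "p \<in> {1..h} \<rightarrow>\<^sub>E {1..k}"
  shows "restrict (fib h p) {1..k} \<in> compositions h {1..k}"
  using sum_fib[OF assms] by (simp add: compositions_def)

lemma composition_dominant_part:
  assumes "c \<in> compositions h K" "finite K" "K \<noteq> {}"
  shows "\<exists>i\<in>K. \<forall>j\<in>K - {i}. c j \<le> h div 2"
proof -
  have "Max (c ` K) \<in> c ` K" using assms by (intro Max_in) auto
  then obtain i where i: "i \<in> K" "c i = Max (c ` K)" by auto
  have "c j \<le> h div 2" if j: "j \<in> K - {i}" for j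
  proof -
    have "c j \<le> c i" using i j assms by simp
    moreover have "c j + c i \<le> h" using composition_two_parts_le[OF assms(1,2)] i(1) j by auto
    ultimately show ?thesis by linarith
  qed
  then show ?thesis using i(1) by blast
qed

lemma inj_on_restrict_compositions:
  assumes "finite K" "i \<in> K"
  shows "inj_on (\<lambda>c. restrict c (K - {i})) (compositions h K)"
proof (rule inj_onI)
  fix c d assume c: "c \<in> compositions h K" and d: "d \<in> compositions h K"
    and eq: "restrict c (K - {i}) = restrict d (K - {i})"
  have others: "c j = d j" if "j \<in> K - {i}" for j
    using fun_cong[OF eq, of j] that by simp
  have "sum c K = h" "sum d K = h" using c d by (simp_all add: compositions_def)
  then have "c i + (\<Sum>j\<in>K - {i}. c j) = d i + (\<Sum>j\<in>K - {i}. d j)"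
    using sum.remove[OF assms, of c] sum.remove[OF assms, of d] by linarith
  moreover have "(\<Sum>j\<in>K - {i}. c j) = (\<Sum>j\<in>K - {i}. d j)"
    using others by (rule sum.cong[OF refl])
  ultimately have "c i = d i" by simp
  show "c = d"
  proof
    fix j
    show "c j = d j"
    proof (cases "j \<in> K")
      case True
      then show ?thesis using others \<open>c i = d i\<close> by (cases "j = i") auto
    next
      case False
      then show ?thesis
        using c d PiE_arb[of c K "\<lambda>_. UNIV" j] PiE_arb[of d K "\<lambda>_. UNIV" j]
        by (simp add: compositions_def)
    qed
  qed
qed

lemma sum_prod_compositions_dominant_le:
  fixes f :: "nat \<Rightarrow> real"
  assumes "finite K" "i \<in> K"
    and f_nonneg: "\<And>n. 0 \<le> f n" and f_le_1: "\<And>n. n \<le> h \<Longrightarrow> f n \<le> 1"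
  shows "(\<Sum>c\<in>{c \<in> compositions h K. \<forall>j\<in>K - {i}. c j \<le> h div 2}. \<Prod>j\<in>K. f (c j))
       \<le> (\<Sum>n=0..h div 2. f n) ^ (card K - 1)"
proof -
  define A where "A = {c \<in> compositions h K. \<forall>j\<in>K - {i}. c j \<le> h div 2}"
  define R where "R c = restrict c (K - {i})" for c :: "'a \<Rightarrow> nat"
  have "(\<Sum>c\<in>A. \<Prod>j\<in>K. f (c j)) \<le> (\<Sum>c\<in>A. \<Prod>j\<in>K - {i}. f (R c j))"
  proof (rule sum_mono)
    fix c assume "c \<in> A"
    then have "f (c i) \<le> 1"
      using f_le_1 composition_part_le[of c h K i] assms(1,2) by (simp add: A_def)
    then show "(\<Prod>j\<in>K. f (c j)) \<le> (\<Prod>j\<in>K - {i}. f (R c j))"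
      using assms by (simp add: prod.remove R_def mult_left_le_one_le prod_nonneg)
  qed
  also have "\<dots> = (\<Sum>c'\<in>R ` A. \<Prod>j\<in>K - {i}. f (c' j))"
    unfolding R_def
    by (intro sum.reindex[symmetric, unfolded comp_def] inj_on_subset[OF inj_on_restrict_compositions])
      (use assms in \<open>auto simp: A_def\<close>)
  also have "\<dots> \<le> (\<Sum>c'\<in>(K - {i}) \<rightarrow>\<^sub>E {0..h div 2}. \<Prod>j\<in>K - {i}. f (c' j))"
  proof (rule sum_mono2)
    show "R ` A \<subseteq> (K - {i}) \<rightarrow>\<^sub>E {0..h div 2}"
      unfolding A_def R_def by (intro image_subsetI) (simp add: restrict_PiE_iff)
  qed (use assms(1) in \<open>auto simp: finite_PiE f_nonneg prod_nonneg\<close>)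
  also have "\<dots> = (\<Prod>j\<in>K - {i}. \<Sum>n=0..h div 2. f n)"
    using assms(1) by (intro prod_sum_PiE[symmetric]) auto
  also have "\<dots> = (\<Sum>n=0..h div 2. f n) ^ (card K - 1)"
    using assms(1,2) by simp
  finally show ?thesis unfolding A_def .
qed

lemma sum_prod_compositions_le:
  fixes f :: "nat \<Rightarrow> real"
  assumes "finite K" "K \<noteq> {}"
    and f_nonneg: "\<And>n. 0 \<le> f n" and f_le_1: "\<And>n. n \<le> h \<Longrightarrow> f n \<le> 1"
  shows "(\<Sum>c\<in>compositions h K. \<Prod>i\<in>K. f (c i))
       \<le> real (card K) * (\<Sum>n=0..h div 2. f n) ^ (card K - 1)"
proof -
  define dominant where "dominant c = {i \<in> K. \<forall>j\<in>K - {i}. c j \<le> h div 2}" for c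
  define G where "G c = (\<Prod>i\<in>K. f (c i))" for c
  have G_nonneg: "0 \<le> G c" for c
    by (simp add: G_def f_nonneg prod_nonneg)
  have "(\<Sum>c\<in>compositions h K. G c) \<le> (\<Sum>c\<in>compositions h K. \<Sum>i\<in>dominant c. G c)"
  proof (rule sum_mono)
    fix c assume c: "c \<in> compositions h K"
    from composition_dominant_part[OF c assms(1,2)]
    obtain i where "i \<in> dominant c" unfolding dominant_def by blast
    moreover have "finite (dominant c)"
      using assms(1) by (simp add: dominant_def)
    ultimately have "0 < card (dominant c)" by (auto simp: card_gt_0_iff)
    then have "1 \<le> real (card (dominant c))" by simp
    then show "G c \<le> (\<Sum>i\<in>dominant c. G c)"
      using mult_right_mono[OF _ G_nonneg, of 1 "real (card (dominant c))"] by simp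
  qed
  also have "\<dots> = (\<Sum>i\<in>K. \<Sum>c\<in>{c \<in> compositions h K. \<forall>j\<in>K - {i}. c j \<le> h div 2}. G c)"
    unfolding dominant_def
    using sum.swap_restrict[OF finite_compositions[OF assms(1)] assms(1)] .
  also have "\<dots> \<le> (\<Sum>i\<in>K. (\<Sum>n=0..h div 2. f n) ^ (card K - 1))"
    unfolding G_def
    by (intro sum_mono sum_prod_compositions_dominant_le[OF assms(1) _ f_nonneg f_le_1])
  finally show ?thesis by (simp add: G_def)
qed

lemma sum_grouped_weights_le:
  fixes F :: "'b \<Rightarrow> real"
  assumes "finite A"
    and F_nonneg: "\<And>b. b \<in> g ` A \<Longrightarrow> 0 \<le> F b"
    and w_nonneg: "\<And>a b. a \<in> A \<Longrightarrow> b \<in> g ` A \<Longrightarrow> 0 \<le> w b a"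
    and w_sum: "\<And>b. b \<in> g ` A \<Longrightarrow> (\<Sum>a\<in>A. w b a) = 1"
  shows "(\<Sum>a\<in>A. F (g a) * w (g a) a) \<le> (\<Sum>b\<in>g ` A. F b)"
proof -
  have "(\<Sum>a\<in>A. F (g a) * w (g a) a) = (\<Sum>b\<in>g ` A. \<Sum>a\<in>{a \<in> A. g a = b}. F (g a) * w (g a) a)"
    using assms(1) by (intro sum.group[symmetric]) auto
  also have "\<dots> = (\<Sum>b\<in>g ` A. \<Sum>a\<in>{a \<in> A. g a = b}. F b * w b a)"
    by (intro sum.cong) auto
  also have "\<dots> \<le> (\<Sum>b\<in>g ` A. \<Sum>a\<in>A. F b * w b a)"
  proof (intro sum_mono sum_mono2)
    fix b assume "b \<in> g ` A"
    then show "\<And>a. a \<in> A - {a \<in> A. g a = b} \<Longrightarrow> 0 \<le> F b * w b a"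
      using F_nonneg w_nonneg by simp
  qed (use assms(1) in auto)
  also have "\<dots> = (\<Sum>b\<in>g ` A. F b)"
    by (intro sum.cong) (simp_all add: w_sum flip: sum_distrib_left)
  finally show ?thesis .
qed

lemma sum_fibre_weight_le_sum_compositions:
  "(\<Sum>p\<in>{1..h} \<rightarrow>\<^sub>E {1..k}. \<Prod>i=1..k. fibre_weight h e (fib h p i))
     \<le> (\<Sum>c\<in>compositions h {1..k}. \<Prod>i=1..k. fibre_weight h (e - 1) (c i))"
proof -
  define P where "P = {1..h} \<rightarrow>\<^sub>E {1..k}"
  define fv where "fv p = restrict (fib h p) {1..k}" for p
  define F where "F c = (\<Prod>i=1..k. fibre_weight h (e - 1) (c i))" for c :: "nat \<Rightarrow> nat"
  define w where "w c p = (\<Prod>q\<in>{1..h}. real (c (p q)) / real h)" for c :: "nat \<Rightarrow> nat" and p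
  have F_nonneg: "0 \<le> F c" for c
    by (simp add: F_def fibre_weight_nonneg prod_nonneg)
  have summand: "(\<Prod>i=1..k. fibre_weight h e (fib h p i)) = F (fv p) * w (fv p) p" if "p \<in> P" for p
  proof -
    have "(\<Prod>i=1..k. fibre_weight h e (fib h p i))
        = (\<Prod>i=1..k. (real (fv p i) / real h) ^ fib h p i) * F (fv p)"
      by (subst fibre_weight_split) (simp add: prod.distrib F_def fv_def)
    also have "(\<Prod>i=1..k. (real (fv p i) / real h) ^ fib h p i) = w (fv p) p"
      using prod_fibres[of p h k "\<lambda>i. real (fv p i) / real h"] that by (simp add: P_def w_def)
    finally show ?thesis by simp
  qed
  have w_sum: "(\<Sum>p\<in>P. w c p) = 1" if "c \<in> compositions h {1..k}" for c
  proof -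
    have "(\<Sum>p\<in>P. w c p) = (\<Prod>q\<in>{1..h}. \<Sum>i=1..k. real (c i) / real h)"
      unfolding P_def w_def by (rule prod_sum_PiE[symmetric]) auto
    also have "\<dots> = (\<Sum>i=1..k. real (c i) / real h) ^ h"
      by simp
    also have "(\<Sum>i=1..k. real (c i) / real h) = real h / real h"
      using that by (simp add: compositions_def flip: sum_divide_distrib of_nat_sum)
    finally show ?thesis by (cases "h = 0") simp_all
  qed
  have fv_compositions: "fv ` P \<subseteq> compositions h {1..k}"
    using restrict_fib_in_compositions by (auto simp: P_def fv_def)
  have "(\<Sum>p\<in>P. \<Prod>i=1..k. fibre_weight h e (fib h p i)) = (\<Sum>p\<in>P. F (fv p) * w (fv p) p)"
    using summand by (rule sum.cong[OF refl])
  also have "\<dots> \<le> (\<Sum>c\<in>fv ` P. F c)"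
    using fv_compositions w_sum F_nonneg
    by (intro sum_grouped_weights_le) (auto simp: P_def w_def prod_nonneg finite_PiE)
  also have "\<dots> \<le> (\<Sum>c\<in>compositions h {1..k}. F c)"
    using fv_compositions F_nonneg by (intro sum_mono2 finite_compositions) auto
  finally show ?thesis unfolding P_def F_def .
qed

lemma sum_fourth_power_div_four_power:
  "(\<Sum>n=1..L. real n ^ 4 / 4 ^ n)
     = 380/81 - (27*real L^4 + 144*real L^3 + 360*real L^2 + 528*real L + 380) / (81 * 4 ^ L)"
proof (induction L)
  case 0
  then show ?case by simp
next
  case (Suc L)
  have "(\<Sum>n=1..Suc L. real n ^ 4 / 4 ^ n) = (\<Sum>n=1..L. real n ^ 4 / 4 ^ n) + real (Suc L) ^ 4 / 4 ^ Suc L"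
    by simp
  also have "\<dots> = 380/81 - (27*real (Suc L)^4 + 144*real (Suc L)^3 + 360*real (Suc L)^2
                   + 528*real (Suc L) + 380) / (81 * 4 ^ Suc L)"
    unfolding Suc.IH by (simp add: field_simps power2_eq_square power3_eq_cube power4_eq_xxxx)
  finally show ?case .
qed

text \<open>\<open>1439/324 = 380/81 - 1/4\<close>: the value of the full series minus its first term.\<close>

lemma sum_fourth_power_div_four_power_le:
  "(\<Sum>n=2..L. real n ^ 4 / 4 ^ n) \<le> 1439/324"
proof (cases "L = 0")
  case False
  then have "(\<Sum>n=1..L. real n ^ 4 / 4 ^ n) = 1/4 + (\<Sum>n=2..L. real n ^ 4 / 4 ^ n)"
    by (simp add: sum.atLeast_Suc_atMost numeral_2_eq_2)
  moreover have "0 \<le> (27*real L^4 + 144*real L^3 + 360*real L^2 + 528*real L + 380) / (81 * 4 ^ L)"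
    by simp
  ultimately show ?thesis using sum_fourth_power_div_four_power[of L] by linarith
qed simp

lemma double_le_two_power: "2 * n \<le> (2::nat) ^ n"
proof (induction n)
  case (Suc n)
  then show ?case by (cases n) auto
qed simp

lemma scaled_power_ratio_le:
  assumes "2 \<le> n" "2 * n \<le> h"
  shows "real h * (real n / real h) ^ n \<le> 4 * real n ^ 2 / (real h * 2 ^ n)"
proof -
  define r where "r = real n / real h"
  have r0: "0 \<le> r" and r_half: "r \<le> 1/2"
    using assms unfolding r_def by (auto simp: field_simps)
  have n_split: "n = 2 + (n - 2)" using assms by simp
  have "r ^ n = r ^ 2 * r ^ (n - 2)" by (subst n_split, subst power_add) simp
  also have "\<dots> \<le> r ^ 2 * (1/2) ^ (n - 2)"
    using r0 r_half by (intro mult_left_mono power_mono) auto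
  finally have "real h * r ^ n \<le> real h * (r ^ 2 * (1/2) ^ (n - 2))"
    by (intro mult_left_mono) auto
  also have "\<dots> = 4 * real n ^ 2 / (real h * 2 ^ n)"
    using assms unfolding r_def
    by (subst (2) n_split) (simp add: power_add power_divide field_simps power2_eq_square)
  finally show ?thesis unfolding r_def .
qed

lemma scaled_power_ratio_le_1:
  assumes "2 \<le> n" "2 * n \<le> h"
  shows "real h * (real n / real h) ^ n \<le> 1"
proof -
  have "real (2 * n) \<le> real (2 ^ n)" using double_le_two_power[of n] by (simp only: of_nat_le_iff)
  then have "2 * real n \<le> 2 ^ n" by simp
  moreover have "2 * real n \<le> real h" using assms by linarith
  ultimately have "(2 * real n) * (2 * real n) \<le> real h * 2 ^ n"
    by (intro mult_mono) auto
  then have "4 * real n ^ 2 / (real h * 2 ^ n) \<le> 1"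
    using assms by (simp add: power2_eq_square)
  then show ?thesis using scaled_power_ratio_le[OF assms] by linarith
qed

lemma sum_scaled_power_ratio_sq_le_1:
  assumes "h \<ge> 8"
  shows "(\<Sum>n=2..h div 2. (real h * (real n / real h) ^ n) ^ 2) \<le> 1"
proof (cases "h = 8")
  case True
  have "{2..4::nat} = {2, 3, 4}" by auto
  then show ?thesis unfolding True by (simp add: power2_eq_square power_divide)
next
  case False
  then have h9: "9 \<le> real h" using assms by simp
  have "(\<Sum>n=2..h div 2. (real h * (real n / real h) ^ n) ^ 2)
      \<le> (\<Sum>n=2..h div 2. (4 * real n ^ 2 / (real h * 2 ^ n)) ^ 2)"
    by (intro sum_mono power_mono scaled_power_ratio_le) auto
  also have "\<dots> = (\<Sum>n=2..h div 2. 16 * (real n ^ 4 / 4 ^ n) / real h ^ 2)"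
  proof (rule sum.cong[OF refl])
    fix n :: nat
    have "(4::real) ^ n = 2 ^ n * 2 ^ n" by (simp flip: power_mult_distrib)
    then show "(4 * real n ^ 2 / (real h * 2 ^ n)) ^ 2 = 16 * (real n ^ 4 / 4 ^ n) / real h ^ 2"
      by (simp add: power_divide power_mult_distrib power2_eq_square power4_eq_xxxx ac_simps)
  qed
  also have "\<dots> = 16 * (\<Sum>n=2..h div 2. real n ^ 4 / 4 ^ n) / real h ^ 2"
    by (simp add: sum_divide_distrib sum_distrib_left)
  also have "\<dots> \<le> 16 * (1439/324) / 81"
  proof (rule frac_le)
    show "81 \<le> real h ^ 2"
      using mult_mono[OF h9 h9] by (simp add: power2_eq_square)
  qed (use sum_fourth_power_div_four_power_le[of "h div 2"] in simp_all)
  finally show ?thesis by simp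
qed

lemma sum_fibre_weight_half_le:
  assumes "h \<ge> 8" "e \<ge> 2"
  shows "(\<Sum>n=0..h div 2. fibre_weight h e n) \<le> 1 + 2 / real h powr e"
proof -
  have hpos: "real h > 0" using assms by simp
  have "2 \<le> h div 2" using assms by simp
  then have "(\<Sum>n=0..h div 2. fibre_weight h e n)
      = fibre_weight h e 0 + fibre_weight h e 1 + (\<Sum>n=2..h div 2. fibre_weight h e n)"
    by (simp add: sum.atLeast_Suc_atMost numeral_2_eq_2)
  also have "fibre_weight h e 0 + fibre_weight h e 1 = 1 + 1 / real h powr e"
    by (simp add: fibre_weight_def powr_divide)
  also have "(\<Sum>n=2..h div 2. fibre_weight h e n)
      \<le> (\<Sum>n=2..h div 2. (real h * (real n / real h) ^ n) ^ 2 / real h powr e)"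
  proof (rule sum_mono)
    fix n assume n: "n \<in> {2..h div 2}"
    define y where "y = real h * (real n / real h) ^ n"
    have y0: "0 \<le> y" and y1: "y \<le> 1"
      using n scaled_power_ratio_le_1[of n h] by (auto simp: y_def)
    have "fibre_weight h e n = ((real n / real h) ^ n) powr e"
      using n hpos by (simp add: fibre_weight_def powr_powr mult.commute flip: powr_realpow)
    also have "\<dots> = (y / real h) powr e"
      using hpos by (simp add: y_def)
    also have "\<dots> = y powr e / real h powr e"
      using hpos y0 by (simp add: powr_divide)
    also have "\<dots> \<le> y powr 2 / real h powr e"
      using y0 y1 assms by (intro divide_right_mono powr_mono') auto
    finally show "fibre_weight h e n \<le> y ^ 2 / real h powr e" using y0 by simp
  qed
  also have "\<dots> \<le> 1 / real h powr e"
    using sum_scaled_power_ratio_sq_le_1[OF assms(1)]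
    by (simp add: divide_right_mono flip: sum_divide_distrib)
  finally show ?thesis by simp
qed

lemma one_plus_power_le_exp:
  assumes "-1 \<le> x"
  shows "(1 + x) ^ n \<le> exp (real n * x)"
proof -
  have "(1 + x) ^ n \<le> exp x ^ n"
    using assms by (intro power_mono) (auto simp: exp_ge_add_one_self)
  then show ?thesis by (simp add: exp_of_nat_mult)
qed

lemma sum_fibre_weight_le_exp:
  assumes "h \<ge> 8" "k \<ge> 1" "e \<ge> 3"
  shows "(\<Sum>p\<in>{1..h} \<rightarrow>\<^sub>E {1..k}. \<Prod>i=1..k. fibre_weight h e (fib h p i))
       \<le> (real h * real k + 1) * exp (2 * real k / real h powr (e - 1))"
proof -
  define x where "x = 2 / real h powr (e - 1)"
  have x_nonneg: "0 \<le> x" by (simp add: x_def)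
  have "(\<Sum>p\<in>{1..h} \<rightarrow>\<^sub>E {1..k}. \<Prod>i=1..k. fibre_weight h e (fib h p i))
      \<le> (\<Sum>c\<in>compositions h {1..k}. \<Prod>i=1..k. fibre_weight h (e - 1) (c i))"
    by (rule sum_fibre_weight_le_sum_compositions)
  also have "\<dots> \<le> real k * (\<Sum>n=0..h div 2. fibre_weight h (e - 1) n) ^ (k - 1)"
    using sum_prod_compositions_le[of "{1..k}" "fibre_weight h (e - 1)" h] assms
    by (simp add: fibre_weight_nonneg fibre_weight_le_1)
  also have "\<dots> \<le> real k * (1 + x) ^ (k - 1)"
    using sum_fibre_weight_half_le[of h "e - 1"] assms
    by (intro mult_left_mono power_mono) (auto simp: x_def fibre_weight_nonneg sum_nonneg)
  also have "\<dots> \<le> real k * exp (real (k - 1) * x)"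
    using x_nonneg by (intro mult_left_mono one_plus_power_le_exp) auto
  also have "\<dots> \<le> (real h * real k + 1) * exp (real k * x)"
  proof (intro mult_mono)
    have "1 * real k \<le> real h * real k"
      using assms by (intro mult_right_mono) auto
    then show "real k \<le> real h * real k + 1" by simp
  qed (use x_nonneg in \<open>auto intro!: mult_right_mono\<close>)
  finally show ?thesis by (simp add: x_def mult.commute)
qed

theorem lemmaB4:
  fixes h k :: nat and C :: real
  assumes "k \<ge> 1" and "C \<ge> 3"
  shows "(\<Sum>p\<in>{1..h} \<rightarrow>\<^sub>E {1..k}.
            (\<Prod>i=1..k. zpow (real (fib h p i)) (C * real (fib h p i)))
            / zpow (real h) (C * real h))
         \<le> max ((real k) ^ 7)
               ((real h * real k + 1) * exp (2 * real k / zpow (real h) (C - 1)))"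
proof -
  let ?S = "\<Sum>p\<in>{1..h} \<rightarrow>\<^sub>E {1..k}. \<Prod>i=1..k. fibre_weight h C (fib h p i)"
  have "(\<Sum>p\<in>{1..h} \<rightarrow>\<^sub>E {1..k}.
      (\<Prod>i=1..k. zpow (real (fib h p i)) (C * real (fib h p i))) / zpow (real h) (C * real h)) = ?S"
    by (rule sum.cong[OF refl]) (rule zpow_fibres_quotient)
  also have "?S \<le> max ((real k) ^ 7) ((real h * real k + 1) * exp (2 * real k / zpow (real h) (C - 1)))"
  proof (cases "h \<le> 7")
    case True
    have "?S \<le> real k ^ h" using assms by (intro sum_fibre_weight_le_power) simp
    also have "\<dots> \<le> real k ^ 7" using True assms by (intro power_increasing) auto
    finally show ?thesis by simp
  next
    case False
    then show ?thesis using sum_fibre_weight_le_exp[of h k C] assms by (simp add: zpow_def)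
  qed
  finally show ?thesis .
qed

end
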